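(* Let $X_1\in\mathbb{R}^{n_1\times d}$, $X_2\in\mathbb{R}^{n_2\times d}$ and let $P_1=I-X_1^+X_1$, $P_2=I-X_2^+X_2$. Then for every integer $n\ge1$, $$\big\|(I-P_1)(P_2P_1)^n\big\|^2=\max_i\Big\{(\cos^2\theta_i)^{2n-1}(1-\cos^2\theta_i)\Big\},$$ where the maximum ranges over the non-zero principal angles $\theta_i\in(0,\pi/2]$ between $\mathrm{range}(X_1^\top)$ and $\mathrm{range}(X_2^\top)$ (equivalently between $\ker X_1$ and $\ker X_2$), with a maximum over the empty set being $0$.
   Context: $A^+$ is the Moore–Penrose pseudoinverse and $\|\cdot\|$ the spectral norm; $P_m$ is the orthogonal projection onto $\ker X_m$. Principal angles: for data matrices $X_1,X_2$ let $r=\min(\operatorname{rank}X_1,\operatorname{rank}X_2)$. The principal angles $0\le\theta_1\le\dots\le\theta_r\le\pi/2$ between $\mathrm{range}(X_1^\top)$ and $\mathrm{range}(X_2^\top)$ are defined recursively by $\cos\theta_i=|u_i^\top v_i|$, where $(u_i,v_i)$ maximizes $|u^\top v|$ over unit vectors $u\in\mathrm{range}(X_1^\top)$, $v\in\mathrm{range}(X_2^\top)$ with $u\perp u_j$, $v\perp v_j$ for all $j<i$. The non-zero principal angles between $\ker X_1$ and $\ker X_2$ (defined analogously) coincide with the non-zero ones between the row spaces. *)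

theory Defs
  imports "HOL-Analysis.Analysis"
begin

definition pinv :: "real^'n^'m \<Rightarrow> real^'m^'n" where
  "pinv A = (THE B. A ** B ** A = A \<and> B ** A ** B = B \<and>
                    transpose (A ** B) = A ** B \<and> transpose (B ** A) = B ** A)"

primrec matpow :: "real^'n^'n \<Rightarrow> nat \<Rightarrow> real^'n^'n" where
  "matpow A 0 = mat 1"
| "matpow A (Suc k) = A ** matpow A k"

definition spec_norm :: "real^'n^'m \<Rightarrow> real" where
  "spec_norm A = onorm (\<lambda>x. A *v x)"

definition row_space :: "real^'d^'n \<Rightarrow> (real^'d) set" where
  "row_space X = range (\<lambda>y. transpose X *v y)"

text \<open>u, v (indices 0..r-1) form a system of principal vector pairs between S and T,
  following the recursive variational definition.\<close>
definition principal_vectors ::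
  "(real^'d) set \<Rightarrow> (real^'d) set \<Rightarrow> nat \<Rightarrow> (nat \<Rightarrow> real^'d) \<Rightarrow> (nat \<Rightarrow> real^'d) \<Rightarrow> bool" where
  "principal_vectors S T r u v \<longleftrightarrow>
     (\<forall>i<r. u i \<in> S \<and> v i \<in> T \<and> norm (u i) = 1 \<and> norm (v i) = 1 \<and>
            (\<forall>j<i. u i \<bullet> u j = 0 \<and> v i \<bullet> v j = 0) \<and>
            (\<forall>x y. x \<in> S \<longrightarrow> y \<in> T \<longrightarrow> norm x = 1 \<longrightarrow> norm y = 1 \<longrightarrow>
                   (\<forall>j<i. x \<bullet> u j = 0 \<and> y \<bullet> v j = 0) \<longrightarrow> \<bar>x \<bullet> y\<bar> \<le> \<bar>u i \<bullet> v i\<bar>))"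

definition n_angles :: "real^'d^'n1 \<Rightarrow> real^'d^'n2 \<Rightarrow> nat" where
  "n_angles X1 X2 = min (rank X1) (rank X2)"

text \<open>The i-th principal angle theta_(i+1) (0-based index i < n_angles X1 X2).\<close>
definition principal_angle :: "real^'d^'n1 \<Rightarrow> real^'d^'n2 \<Rightarrow> nat \<Rightarrow> real" where
  "principal_angle X1 X2 i =
     (let (u, v) = (SOME (u, v). principal_vectors (row_space X1) (row_space X2) (n_angles X1 X2) u v)
      in arccos \<bar>u i \<bullet> v i\<bar>)"

end

theory Submission
  imports Defs
begin

text \<open>Let \<open>Q\<^sub>k = X\<^sub>k\<^sup>+ X\<^sub>k\<close> be the orthogonal projection onto the row space of \<open>X\<^sub>k\<close>, so that
  \<open>P\<^sub>k = I - Q\<^sub>k\<close>, and put \<open>A = (I - P\<^sub>1)(P\<^sub>2 P\<^sub>1)\<^sup>n\<close>, \<open>B = P\<^sub>1 P\<^sub>2 P\<^sub>1\<close> and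
  \<open>f t = t\<^sup>2\<^sup>n\<^sup>-\<^sup>1 (1 - t)\<close>. Then \<open>A\<^sup>T A = B\<^sup>2\<^sup>n\<^sup>-\<^sup>1 - B\<^sup>2\<^sup>n\<close> commutes with the symmetric matrix \<open>B\<close>, so
  the top eigenvalue \<open>\<parallel>A\<parallel>\<^sup>2\<close> of \<open>A\<^sup>T A\<close> equals \<open>f \<lambda>\<close> for an eigenvalue \<open>\<lambda>\<close> of \<open>B\<close>, while
  \<open>f \<lambda> \<le> \<parallel>A\<parallel>\<^sup>2\<close> for every eigenvalue \<open>\<lambda>\<close> of \<open>B\<close>. As \<open>f\<close> vanishes at \<open>0\<close> and \<open>1\<close>, only the
  eigenvalues in \<open>(0, 1)\<close> matter. These are shared by \<open>B\<close> and \<open>Q\<^sub>1 Q\<^sub>2 Q\<^sub>1\<close>, and the non-zero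
  eigenvalues of \<open>Q\<^sub>1 Q\<^sub>2 Q\<^sub>1\<close> are the squared cosines of the principal angles: principal
  vectors satisfy \<open>Q\<^sub>2 u\<^sub>i = (u\<^sub>i \<bullet> v\<^sub>i) v\<^sub>i\<close> and \<open>Q\<^sub>1 v\<^sub>i = (u\<^sub>i \<bullet> v\<^sub>i) u\<^sub>i\<close>, and they exhaust the
  smaller of the two row spaces.\<close>

declare transpose_matrix_vector [simp del]

lemma matrix_vector_mult_inner_transpose:
  "((A::real^'n^'m) *v x) \<bullet> y = x \<bullet> (transpose A *v y)"
  by (metis dot_lmul_matrix inner_commute transpose_matrix_vector)

lemma matrix_eqI: "(\<And>x. (A::real^'n^'m) *v x = B *v x) \<Longrightarrow> A = B"
  by (simp add: matrix_eq)

lemma matrix_diff_ldistrib: "(A::real^'n^'m) ** (B - C) = A ** B - A ** C"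
  by (rule matrix_eqI)
    (simp add: matrix_vector_mul_assoc[symmetric] matrix_vector_mult_diff_rdistrib
      matrix_vector_mult_diff_distrib)

lemma matrix_diff_rdistrib: "((B::real^'n^'m) - C) ** A = B ** A - C ** A"
  by (rule matrix_eqI) (simp add: matrix_vector_mul_assoc[symmetric] matrix_vector_mult_diff_rdistrib)

lemma transpose_diff: "transpose ((A::real^'n^'m) - B) = transpose A - transpose B"
  by (simp add: transpose_def vec_eq_iff)

lemma symmetric_matrixI:
  assumes "\<And>x y. ((M::real^'n^'n) *v x) \<bullet> y = x \<bullet> (M *v y)"
  shows "transpose M = M"
proof (rule matrix_eqI)
  fix y
  have "\<forall>x. x \<bullet> (transpose M *v y - M *v y) = 0"
    using assms
    by (simp add: inner_diff_right matrix_vector_mult_inner_transpose[symmetric] inner_commute)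
  then show "transpose M *v y = M *v y"
    by (metis eq_iff_diff_eq_0 inner_eq_zero_iff)
qed

section \<open>The Moore--Penrose pseudoinverse\<close>

definition is_pseudoinverse :: "real^'n^'m \<Rightarrow> real^'m^'n \<Rightarrow> bool" where
  "is_pseudoinverse A B \<longleftrightarrow> A ** B ** A = A \<and> B ** A ** B = B \<and>
     transpose (A ** B) = A ** B \<and> transpose (B ** A) = B ** A"

lemma pseudoinverse_unique:
  assumes "is_pseudoinverse X B" "is_pseudoinverse X C" shows "B = C"
proof -
  note p = assms[unfolded is_pseudoinverse_def]
  have XT: "transpose X = transpose X ** X ** C"
  proof -
    have "transpose X = transpose (X ** C ** X)" using p by simp
    also have "\<dots> = transpose X ** transpose (X ** C)" by (simp add: matrix_transpose_mul)
    also have "\<dots> = transpose X ** (X ** C)" using p by simp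
    finally show ?thesis by (simp add: matrix_mul_assoc)
  qed
  have XT2: "transpose X = B ** X ** transpose X"
  proof -
    have "transpose X = transpose (X ** B ** X)" using p by simp
    also have "\<dots> = transpose (B ** X) ** transpose X"
      by (simp add: matrix_transpose_mul matrix_mul_assoc)
    also have "\<dots> = B ** X ** transpose X" using p by simp
    finally show ?thesis .
  qed
  have "B = B ** transpose (X ** B)" using p by (simp add: matrix_mul_assoc)
  also have "\<dots> = B ** transpose B ** transpose X"
    by (simp add: matrix_transpose_mul matrix_mul_assoc)
  also have "\<dots> = B ** transpose B ** (transpose X ** X ** C)" using XT by simp
  also have "\<dots> = B ** transpose (X ** B) ** X ** C"
    by (simp add: matrix_transpose_mul matrix_mul_assoc)
  also have "\<dots> = B ** X ** C" using p by (simp add: matrix_mul_assoc)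
  finally have BC: "B = B ** X ** C" .
  have "C = transpose (C ** X) ** C" using p by (simp add: matrix_mul_assoc)
  also have "\<dots> = transpose X ** transpose C ** C" by (simp add: matrix_transpose_mul)
  also have "\<dots> = B ** X ** transpose X ** transpose C ** C" using XT2 by simp
  also have "\<dots> = B ** X ** transpose (C ** X) ** C"
    by (simp add: matrix_transpose_mul matrix_mul_assoc)
  also have "\<dots> = B ** X ** (C ** X ** C)" using p by (simp flip: matrix_mul_assoc)
  also have "\<dots> = B ** X ** C" using p by simp
  finally show ?thesis using BC by simp
qed

lemma subspace_row_space: "subspace (row_space X)"
  unfolding row_space_def
  by (metis linear_subspace_image matrix_vector_mul_linear subspace_UNIV)

lemma row_space_kernel_eq_0:
  assumes "x \<in> row_space X" "X *v x = 0" shows "x = 0"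
proof -
  obtain y where "x = transpose X *v y" using assms(1) unfolding row_space_def by auto
  then have "x \<bullet> x = y \<bullet> (X *v x)"
    by (metis matrix_vector_mult_inner_transpose inner_commute transpose_transpose)
  then show ?thesis using assms(2) by simp
qed

lemma gram_bij_betw_row_space:
  "bij_betw (\<lambda>x. (transpose X ** X) *v x) (row_space X) (row_space X)"
proof -
  define R where "R = row_space X"
  define G where "G = transpose X ** X"
  have subR: "subspace R" unfolding R_def by (rule subspace_row_space)
  have GR: "G *v x \<in> R" for x
    unfolding R_def G_def row_space_def by (simp add: matrix_vector_mul_assoc[symmetric])
  have inj: "inj_on (\<lambda>x. G *v x) R"
  proof (rule inj_onI)
    fix x x' assume "x \<in> R" "x' \<in> R" "G *v x = G *v x'"
    then have xR: "x - x' \<in> R" and Gx: "G *v (x - x') = 0"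
      by (auto simp: subR subspace_diff matrix_vector_mult_diff_distrib)
    have "(X *v (x - x')) \<bullet> (X *v (x - x')) = (x - x') \<bullet> (G *v (x - x'))"
      by (simp add: G_def matrix_vector_mult_inner_transpose matrix_vector_mul_assoc)
    then have "X *v (x - x') = 0" using Gx by simp
    then show "x = x'" using row_space_kernel_eq_0 xR unfolding R_def by force
  qed
  have sub_image: "subspace ((\<lambda>x. G *v x) ` R)"
    by (simp add: linear_subspace_image subR)
  have "dim ((\<lambda>x. G *v x) ` R) = dim R"
    by (metis dim_image_eq span_eq_iff subR inj matrix_vector_mul_linear)
  then have "(\<lambda>x. G *v x) ` R = R"
    using subspace_dim_equal[OF sub_image subR] GR by auto
  with inj show ?thesis unfolding bij_betw_def R_def G_def by simp
qed

lemma normal_equations_solvable: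
  fixes X :: "real^'d^'m"
  obtains B :: "real^'m^'d" where "\<And>y. B *v y \<in> row_space X"
    and "\<And>y. transpose X *v (X *v (B *v y)) = transpose X *v y"
proof -
  let ?G = "\<lambda>x. (transpose X ** X) *v x"
  note bij = gram_bij_betw_row_space[of X]
  obtain g where g: "range g \<subseteq> row_space X" "linear g" "\<And>x. x \<in> row_space X \<Longrightarrow> g (?G x) = x"
    using linear_inj_on_left_inverse[of ?G "row_space X"] bij subspace_row_space
    by (metis bij_betw_def span_eq_iff matrix_vector_mul_linear)
  define B where "B = matrix (\<lambda>y. g (transpose X *v y))"
  have "linear (\<lambda>y. g (transpose X *v y))"
    using linear_compose[OF matrix_vector_mul_linear g(2)] unfolding o_def by blast
  then have Bv: "B *v y = g (transpose X *v y)" for y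
    unfolding B_def by (metis matrix_vector_mul(2))
  show thesis
  proof
    show "B *v y \<in> row_space X" for y using g(1) Bv by auto
    show "transpose X *v (X *v (B *v y)) = transpose X *v y" for y
    proof -
      have "transpose X *v y \<in> row_space X" unfolding row_space_def by auto
      then obtain x where "x \<in> row_space X" "transpose X *v y = ?G x"
        using bij unfolding bij_betw_def by force
      then show ?thesis using Bv g(3) by (simp add: matrix_vector_mul_assoc)
    qed
  qed
qed

lemma normal_solution_right_inverse:
  fixes X :: "real^'d^'m"
  assumes normal: "\<And>y. transpose X *v (X *v (B *v y)) = transpose X *v y"
  shows "X *v (B *v (X *v x)) = X *v x"
proof -
  let ?z = "B *v (X *v x) - x"
  have "(X *v ?z) \<bullet> (X *v ?z) = ?z \<bullet> (transpose X *v (X *v ?z))"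
    by (simp add: matrix_vector_mult_inner_transpose)
  also have "\<dots> = 0" using normal[of "X *v x"] by (simp add: matrix_vector_mult_diff_distrib)
  finally show ?thesis by (simp add: matrix_vector_mult_diff_distrib)
qed

lemma normal_solution_is_pseudoinverse:
  fixes X :: "real^'d^'m"
  assumes BR: "\<And>y. B *v y \<in> row_space X"
    and normal: "\<And>y. transpose X *v (X *v (B *v y)) = transpose X *v y"
  shows "is_pseudoinverse X B"
proof -
  note XBX = normal_solution_right_inverse[OF normal]
  have BXB: "B *v (X *v (B *v y)) = B *v y" for y
  proof -
    let ?w = "B *v (X *v (B *v y)) - B *v y"
    have "?w \<in> row_space X" by (rule subspace_diff[OF subspace_row_space BR BR])
    moreover have "X *v ?w = 0" using XBX[of "B *v y"] by (simp add: matrix_vector_mult_diff_distrib)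
    ultimately show ?thesis using row_space_kernel_eq_0 by fastforce
  qed
  have XB_sym: "(X *v (B *v x)) \<bullet> y = x \<bullet> (X *v (B *v y))" for x y
  proof -
    have "(X *v (B *v x)) \<bullet> (X *v (B *v y)) = (X *v (B *v x)) \<bullet> y" for x y
      using normal[of y] by (metis matrix_vector_mult_inner_transpose)
    from this[of x y] this[of y x] show ?thesis by (simp add: inner_commute)
  qed
  have BX_sym: "(B *v (X *v x)) \<bullet> y = x \<bullet> (B *v (X *v y))" for x y
  proof -
    have "(B *v (X *v x)) \<bullet> y = (B *v (X *v x)) \<bullet> (B *v (X *v y))" for x y
    proof -
      obtain w where w: "B *v (X *v x) = transpose X *v w"
        using BR[of "X *v x"] unfolding row_space_def by auto
      have "(B *v (X *v x)) \<bullet> y = w \<bullet> (X *v (B *v (X *v y)))"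
        using w XBX by (metis matrix_vector_mult_inner_transpose transpose_transpose)
      also have "\<dots> = (B *v (X *v x)) \<bullet> (B *v (X *v y))"
        using w by (metis matrix_vector_mult_inner_transpose transpose_transpose)
      finally show ?thesis .
    qed
    from this[of x y] this[of y x] show ?thesis by (simp add: inner_commute)
  qed
  show ?thesis
    unfolding is_pseudoinverse_def
  proof (intro conjI)
    show "X ** B ** X = X"
      by (rule matrix_eqI) (simp add: matrix_vector_mul_assoc[symmetric] XBX)
    show "B ** X ** B = B"
      by (rule matrix_eqI) (simp add: matrix_vector_mul_assoc[symmetric] BXB)
    show "transpose (X ** B) = X ** B"
      by (rule symmetric_matrixI) (simp add: matrix_vector_mul_assoc[symmetric] XB_sym)
    show "transpose (B ** X) = B ** X"
      by (rule symmetric_matrixI) (simp add: matrix_vector_mul_assoc[symmetric] BX_sym)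
  qed
qed

lemma pseudoinverse_exists: "\<exists>B. is_pseudoinverse (X::real^'d^'m) B"
  by (metis normal_equations_solvable normal_solution_is_pseudoinverse)

lemma pinv_is_pseudoinverse: "is_pseudoinverse X (pinv X)"
proof -
  have "\<exists>!B. is_pseudoinverse X B" using pseudoinverse_exists pseudoinverse_unique by blast
  then show ?thesis unfolding pinv_def is_pseudoinverse_def[symmetric] by (rule theI')
qed

section \<open>Orthogonal projections\<close>

definition orth_proj :: "real^'n^'n \<Rightarrow> bool" where
  "orth_proj P \<longleftrightarrow> transpose P = P \<and> P ** P = P"

lemma orth_proj_inner: "orth_proj P \<Longrightarrow> (P *v x) \<bullet> y = x \<bullet> (P *v y)"
  unfolding orth_proj_def by (metis matrix_vector_mult_inner_transpose)

lemma orth_proj_idem: "orth_proj P \<Longrightarrow> P *v (P *v x) = P *v x"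
  unfolding orth_proj_def by (simp add: matrix_vector_mul_assoc)

lemma orth_proj_inner_self: "orth_proj P \<Longrightarrow> (P *v x) \<bullet> (P *v x) = x \<bullet> (P *v x)"
  by (metis orth_proj_idem orth_proj_inner)

lemma orth_proj_compl: "orth_proj P \<Longrightarrow> orth_proj (mat 1 - P)"
  unfolding orth_proj_def by (auto simp: transpose_diff matrix_diff_ldistrib matrix_diff_rdistrib)

lemma orth_proj_norm_le: "orth_proj P \<Longrightarrow> norm (P *v x) \<le> norm x"
proof -
  assume P: "orth_proj P"
  have "norm (P *v x) ^ 2 = x \<bullet> (P *v x)"
    using orth_proj_inner_self[OF P] by (simp add: dot_square_norm)
  also have "\<dots> \<le> norm x * norm (P *v x)" by (rule norm_cauchy_schwarz)
  finally show ?thesis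
    by (cases "P *v x = 0") (auto simp: power2_eq_square mult_le_cancel_right)
qed

lemma orth_proj_pinv: "orth_proj (pinv X ** X)"
  using pinv_is_pseudoinverse[of X] unfolding is_pseudoinverse_def orth_proj_def
  by (metis matrix_mul_assoc)

lemma row_space_eq_fixed_points: "row_space X = {x. (pinv X ** X) *v x = x}"
proof -
  have p: "is_pseudoinverse X (pinv X)" by (rule pinv_is_pseudoinverse)
  then have Q: "pinv X ** X = transpose X ** transpose (pinv X)"
    unfolding is_pseudoinverse_def by (metis matrix_transpose_mul)
  have "pinv X ** X ** transpose X = transpose (X ** pinv X ** X)"
    using Q by (simp add: matrix_transpose_mul matrix_mul_assoc)
  then have QX: "pinv X ** X ** transpose X = transpose X"
    using p unfolding is_pseudoinverse_def by simp
  show ?thesis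
  proof (intro set_eqI iffI)
    fix x assume "x \<in> row_space X"
    then obtain y where "x = transpose X *v y" unfolding row_space_def by auto
    then show "x \<in> {x. (pinv X ** X) *v x = x}" using QX by (simp add: matrix_vector_mul_assoc)
  next
    fix x assume "x \<in> {x. (pinv X ** X) *v x = x}"
    then have "x = transpose X *v (transpose (pinv X) *v x)"
      using Q by (simp add: matrix_vector_mul_assoc)
    then show "x \<in> row_space X" unfolding row_space_def by blast
  qed
qed

lemma rank_eq_dim_row_space: "rank X = dim (row_space X)"
  unfolding row_space_def by (metis rank_dim_range rank_transpose)

lemma orth_proj_sandwich_symmetric:
  "orth_proj P \<Longrightarrow> orth_proj P' \<Longrightarrow> transpose (P ** P' ** P) = P ** P' ** P"
  unfolding orth_proj_def by (simp add: matrix_transpose_mul matrix_mul_assoc)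

lemma orth_proj_sandwich_eigenvalue_bounds:
  assumes P: "orth_proj P" and P': "orth_proj P'"
    and eig: "(P ** P' ** P) *v x = lam *\<^sub>R x" and "x \<noteq> 0"
  shows "0 \<le> lam" "lam \<le> 1"
proof -
  have "lam * (x \<bullet> x) = x \<bullet> ((P ** P' ** P) *v x)" using eig by simp
  also have "\<dots> = (P' *v (P *v x)) \<bullet> (P' *v (P *v x))"
    using orth_proj_inner[OF P, of x "P' *v (P *v x)"] orth_proj_inner_self[OF P']
    by (simp add: matrix_vector_mul_assoc[symmetric])
  finally have lam_eq: "lam * (x \<bullet> x) = norm (P' *v (P *v x)) ^ 2"
    by (simp add: dot_square_norm)
  have "norm (P' *v (P *v x)) \<le> norm x"
    using orth_proj_norm_le[OF P', of "P *v x"] orth_proj_norm_le[OF P, of x] by linarith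
  then have "norm (P' *v (P *v x)) ^ 2 \<le> x \<bullet> x"
    by (simp add: dot_square_norm power_mono)
  moreover have "x \<bullet> x > 0" using \<open>x \<noteq> 0\<close> by simp
  ultimately have "0 * (x \<bullet> x) \<le> lam * (x \<bullet> x)" "lam * (x \<bullet> x) \<le> 1 * (x \<bullet> x)"
    using lam_eq by simp_all
  then show "0 \<le> lam" "lam \<le> 1" using \<open>x \<bullet> x > 0\<close> by (meson mult_le_cancel_right_pos)+
qed

text \<open>An eigenvector \<open>x\<close> of \<open>P P' P\<close> with eigenvalue in \<open>(0, 1)\<close> yields the eigenvector
  \<open>\<lambda> x - P' x\<close> of \<open>(I - P)(I - P')(I - P)\<close>.\<close>

lemma orth_proj_sandwich_eigenvalue_compl:
  assumes P: "orth_proj P" and P': "orth_proj P'"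
    and eig: "(P ** P' ** P) *v x = lam *\<^sub>R x" and x0: "x \<noteq> 0" and lam: "0 < lam" "lam < 1"
  obtains z where "z \<noteq> 0" "((mat 1 - P) ** (mat 1 - P') ** (mat 1 - P)) *v z = lam *\<^sub>R z"
proof -
  have PP'P: "P *v (P' *v (P *v x)) = lam *\<^sub>R x"
    using eig by (simp add: matrix_vector_mul_assoc matrix_mul_assoc)
  have xP: "P *v x = x"
  proof -
    have "P *v (lam *\<^sub>R x) = lam *\<^sub>R x" using orth_proj_idem[OF P, of "P' *v (P *v x)"] PP'P by simp
    then show ?thesis using lam by (simp add: matrix_vector_mult_scaleR)
  qed
  have PP'x: "P *v (P' *v x) = lam *\<^sub>R x" using PP'P xP by simp
  define z where "z = lam *\<^sub>R x - P' *v x"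
  have Pz: "P *v z = 0" unfolding z_def
    by (simp add: matrix_vector_mult_diff_distrib matrix_vector_mult_scaleR xP PP'x)
  have P'z: "(mat 1 - P') *v z = lam *\<^sub>R (x - P' *v x)"
    by (simp add: z_def matrix_vector_mult_diff_rdistrib matrix_vector_mult_diff_distrib
        matrix_vector_mult_scaleR orth_proj_idem[OF P'] algebra_simps)
  have "((mat 1 - P) ** (mat 1 - P') ** (mat 1 - P)) *v z = (mat 1 - P) *v ((mat 1 - P') *v z)"
    by (simp add: matrix_vector_mul_assoc[symmetric] matrix_vector_mult_diff_rdistrib Pz)
  also have "\<dots> = lam *\<^sub>R (x - P *v x - P' *v x + P *v (P' *v x))"
    unfolding P'z
    by (simp add: matrix_vector_mult_diff_rdistrib matrix_vector_mult_diff_distrib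
        matrix_vector_mult_scaleR algebra_simps)
  also have "\<dots> = lam *\<^sub>R z" by (simp add: xP PP'x z_def)
  finally have "((mat 1 - P) ** (mat 1 - P') ** (mat 1 - P)) *v z = lam *\<^sub>R z" .
  moreover have "z \<noteq> 0"
  proof
    assume "z = 0"
    then have "P' *v x = lam *\<^sub>R x" by (simp add: z_def)
    then have "(lam * lam) *\<^sub>R x = lam *\<^sub>R x"
      using orth_proj_idem[OF P', of x] by (simp add: matrix_vector_mult_scaleR)
    then have "lam * lam = lam" using x0 by simp
    then show False using lam by simp
  qed
  ultimately show thesis using that by blast
qed

section \<open>Principal vectors\<close>

lemma principal_vectorsD:
  assumes "principal_vectors S T r u v" "i < r"
  shows "u i \<in> S" "v i \<in> T" "norm (u i) = 1" "norm (v i) = 1"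
    and "\<And>j. j < i \<Longrightarrow> u i \<bullet> u j = 0 \<and> v i \<bullet> v j = 0"
    and "\<And>x y. x \<in> S \<Longrightarrow> y \<in> T \<Longrightarrow> norm x = 1 \<Longrightarrow> norm y = 1 \<Longrightarrow>
           \<forall>j<i. x \<bullet> u j = 0 \<and> y \<bullet> v j = 0 \<Longrightarrow> \<bar>x \<bullet> y\<bar> \<le> \<bar>u i \<bullet> v i\<bar>"
  using assms unfolding principal_vectors_def by blast+

lemma principal_vectors_swap:
  "principal_vectors S T r u v \<Longrightarrow> principal_vectors T S r v u"
  unfolding principal_vectors_def by (auto simp: inner_commute) (metis inner_commute)

lemma abs_inner_principal_vectors_le_1:
  "principal_vectors S T r u v \<Longrightarrow> i < r \<Longrightarrow> \<bar>u i \<bullet> v i\<bar> \<le> 1"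
  using Cauchy_Schwarz_ineq2[of "u i" "v i"] principal_vectorsD(3,4) by fastforce

lemma exists_nonzero_orthogonal_in_subspace:
  fixes w :: "nat \<Rightarrow> real^'n"
  assumes S: "subspace S" and k: "k < dim S" and w: "\<And>j. j < k \<Longrightarrow> w j \<in> S"
  obtains x where "x \<in> S" "x \<noteq> 0" "\<And>j. j < k \<Longrightarrow> x \<bullet> w j = 0"
proof -
  let ?W = "w ` {..<k}"
  have sub: "span ?W \<subseteq> span S" using w by (intro span_mono) auto
  have "dim ?W \<le> card ?W" by (rule dim_le_card) (auto intro: span_base)
  also have "\<dots> \<le> k" using card_image_le[of "{..<k}" w] by simp
  finally have "span ?W \<noteq> span S" using k by (metis dim_span less_irrefl order_le_less_trans)
  with sub have "span ?W \<subset> span S" by auto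
  then obtain x where x: "x \<noteq> 0" "x \<in> span S" "\<And>y. y \<in> span ?W \<Longrightarrow> orthogonal x y"
    using orthogonal_to_subspace_exists_gen by blast
  show thesis
  proof
    show "x \<in> S" using x(2) S by (metis span_eq_iff)
    show "x \<noteq> 0" by (fact x(1))
    show "x \<bullet> w j = 0" if "j < k" for j
      using x(3)[of "w j"] that by (auto intro: span_base simp: orthogonal_def)
  qed
qed

lemma principal_vectors_Suc:
  "principal_vectors S T (Suc k) u v \<longleftrightarrow> principal_vectors S T k u v \<and>
     u k \<in> S \<and> v k \<in> T \<and> norm (u k) = 1 \<and> norm (v k) = 1 \<and>
     (\<forall>j<k. u k \<bullet> u j = 0 \<and> v k \<bullet> v j = 0) \<and>
     (\<forall>x y. x \<in> S \<longrightarrow> y \<in> T \<longrightarrow> norm x = 1 \<longrightarrow> norm y = 1 \<longrightarrow>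
            (\<forall>j<k. x \<bullet> u j = 0 \<and> y \<bullet> v j = 0) \<longrightarrow> \<bar>x \<bullet> y\<bar> \<le> \<bar>u k \<bullet> v k\<bar>)"
  unfolding principal_vectors_def by (auto simp: less_Suc_eq)

lemma principal_vectors_fun_upd:
  "principal_vectors S T k (u(k := a)) (v(k := b)) \<longleftrightarrow> principal_vectors S T k u v"
  unfolding principal_vectors_def by auto

lemma closed_orthogonal_family: "closed {x::'a::real_inner. \<forall>j<k. x \<bullet> w j = 0}"
proof -
  have "{x::'a. \<forall>j<k. x \<bullet> w j = 0} = (\<Inter>j\<in>{..<k}. {x. w j \<bullet> x = 0})"
    by (auto simp: inner_commute)
  then show ?thesis by (simp add: closed_INT closed_hyperplane)
qed

lemma principal_vectors_extend:
  fixes S T :: "(real^'n) set"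
  assumes S: "subspace S" and T: "subspace T" and pv: "principal_vectors S T k u v"
    and k: "k < dim S" "k < dim T"
  obtains a b where "principal_vectors S T (Suc k) (u(k := a)) (v(k := b))"
proof -
  define K where "K = (S \<inter> {x. \<forall>j<k. x \<bullet> u j = 0} \<inter> sphere 0 1) \<times>
                      (T \<inter> {y. \<forall>j<k. y \<bullet> v j = 0} \<inter> sphere 0 1)"
  have "compact K" unfolding K_def
    using closed_subspace[OF S] closed_subspace[OF T] closed_orthogonal_family
    by (intro compact_Times closed_Int_compact) auto
  moreover have "K \<noteq> {}"
  proof -
    obtain x where x: "x \<in> S" "x \<noteq> 0" "\<And>j. j < k \<Longrightarrow> x \<bullet> u j = 0"
      using exists_nonzero_orthogonal_in_subspace[OF S k(1)] principal_vectorsD(1)[OF pv] by auto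
    obtain y where y: "y \<in> T" "y \<noteq> 0" "\<And>j. j < k \<Longrightarrow> y \<bullet> v j = 0"
      using exists_nonzero_orthogonal_in_subspace[OF T k(2)] principal_vectorsD(2)[OF pv] by auto
    have "((1/norm x) *\<^sub>R x, (1/norm y) *\<^sub>R y) \<in> K"
      unfolding K_def using x y S T by (auto simp: subspace_scale)
    then show ?thesis by blast
  qed
  moreover have "continuous_on K (\<lambda>p. \<bar>fst p \<bullet> snd p\<bar>)" by (intro continuous_intros)
  ultimately obtain p where pK: "p \<in> K" and pmax: "\<forall>q\<in>K. \<bar>fst q \<bullet> snd q\<bar> \<le> \<bar>fst p \<bullet> snd p\<bar>"
    using continuous_attains_sup by blast
  show thesis
  proof (rule that[of "fst p" "snd p"])
    have "(x, y) \<in> K" if "x \<in> S" "y \<in> T" "norm x = 1" "norm y = 1"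
      "\<forall>j<k. x \<bullet> u j = 0 \<and> y \<bullet> v j = 0" for x y
      using that unfolding K_def by auto
    then show "principal_vectors S T (Suc k) (u(k := fst p)) (v(k := snd p))"
      using pK pmax pv unfolding principal_vectors_Suc principal_vectors_fun_upd K_def
      by (auto simp: inner_commute)
  qed
qed

lemma principal_vectors_exist:
  fixes S T :: "(real^'n) set"
  assumes S: "subspace S" and T: "subspace T"
  shows "k \<le> dim S \<Longrightarrow> k \<le> dim T \<Longrightarrow> \<exists>u v. principal_vectors S T k u v"
proof (induction k)
  case 0
  then show ?case by (simp add: principal_vectors_def)
next
  case (Suc k)
  then obtain u v where "principal_vectors S T k u v" by auto
  with Suc.prems show ?case
    using principal_vectors_extend[OF S T] by (metis Suc_le_eq)
qed

lemma eq_scaleR_if_norm_le_inner: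
  fixes w b :: "'a::real_inner"
  assumes "norm b = 1" "w \<bullet> b = s" "norm w \<le> \<bar>s\<bar>"
  shows "w = s *\<^sub>R b"
proof -
  have "w \<bullet> w \<le> s * s"
    using assms(3) by (metis abs_mult_self_eq mult_mono' norm_ge_zero abs_ge_zero dot_square_norm power2_eq_square)
  moreover have "b \<bullet> b = 1" using assms(1) by (simp add: dot_square_norm)
  ultimately have "(w - s *\<^sub>R b) \<bullet> (w - s *\<^sub>R b) \<le> 0"
    using assms(2) by (simp add: inner_diff_left inner_diff_right inner_commute algebra_simps)
  then show ?thesis by (metis eq_iff_diff_eq_0 inner_eq_zero_iff inner_ge_zero order_antisym)
qed

text \<open>Only the second half of the hypothesis for earlier indices is needed: it makes \<open>u i\<close>
  orthogonal to the earlier \<open>v j\<close>, so that \<open>Q' u i\<close> is a competitor in the maximisation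
  defining the \<open>i\<close>-th pair.\<close>

lemma principal_vector_image:
  assumes Q: "orth_proj Q" and Q': "orth_proj Q'"
    and pv: "principal_vectors {x. Q *v x = x} {x. Q' *v x = x} r u v" and i: "i < r"
    and prev: "\<And>j. j < i \<Longrightarrow> Q *v v j = (u j \<bullet> v j) *\<^sub>R u j"
  shows "Q' *v u i = (u i \<bullet> v i) *\<^sub>R v i"
proof -
  note pvi = principal_vectorsD[OF pv i]
  define w where "w = Q' *v u i"
  have wv: "w \<bullet> v j = 0" if "j < i" for j
  proof -
    have vj: "Q' *v v j = v j" using principal_vectorsD(2)[OF pv] that i by simp
    have "w \<bullet> v j = u i \<bullet> v j" unfolding w_def using orth_proj_inner[OF Q'] vj by simp
    also have "\<dots> = u i \<bullet> (Q *v v j)"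
      using orth_proj_inner[OF Q, of "u i" "v j"] pvi(1) by (simp add: inner_commute)
    finally show ?thesis using prev[OF that] pvi(5)[OF that] by simp
  qed
  have "norm w \<le> \<bar>u i \<bullet> v i\<bar>"
  proof (cases "w = 0")
    case False
    let ?y = "(1 / norm w) *\<^sub>R w"
    have "\<bar>u i \<bullet> ?y\<bar> \<le> \<bar>u i \<bullet> v i\<bar>"
    proof (rule pvi(6)[OF pvi(1)])
      show "?y \<in> {x. Q' *v x = x}"
        unfolding w_def by (simp add: matrix_vector_mult_scaleR orth_proj_idem[OF Q'])
    qed (use False pvi(3,5) wv in auto)
    moreover have "u i \<bullet> w = norm w ^ 2"
      unfolding w_def using orth_proj_inner_self[OF Q'] by (simp add: dot_square_norm)
    ultimately show ?thesis using False by (simp add: power2_eq_square)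
  qed simp
  moreover have "w \<bullet> v i = u i \<bullet> v i"
    unfolding w_def using orth_proj_inner[OF Q'] pvi(2) by simp
  ultimately show ?thesis using eq_scaleR_if_norm_le_inner[OF pvi(4)] unfolding w_def by blast
qed

lemma principal_vectors_images:
  assumes Q: "orth_proj Q" and Q': "orth_proj Q'"
    and pv: "principal_vectors {x. Q *v x = x} {x. Q' *v x = x} r u v"
  shows "i < r \<Longrightarrow> Q' *v u i = (u i \<bullet> v i) *\<^sub>R v i \<and> Q *v v i = (u i \<bullet> v i) *\<^sub>R u i"
proof (induction i rule: less_induct)
  case (less i)
  have "Q' *v u i = (u i \<bullet> v i) *\<^sub>R v i"
    by (rule principal_vector_image[OF Q Q' pv less.prems]) (use less in auto)
  moreover have "Q *v v i = (v i \<bullet> u i) *\<^sub>R u i"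
    by (rule principal_vector_image[OF Q' Q principal_vectors_swap[OF pv] less.prems])
      (use less in \<open>auto simp: inner_commute\<close>)
  ultimately show ?case by (simp add: inner_commute)
qed

lemma orthonormal_family_spans:
  fixes w :: "nat \<Rightarrow> real^'n"
  assumes w: "\<And>i. i < r \<Longrightarrow> w i \<in> S \<and> norm (w i) = 1"
    and orth: "\<And>i j. i < r \<Longrightarrow> j < i \<Longrightarrow> w i \<bullet> w j = 0" and r: "dim S \<le> r"
  shows "S \<subseteq> span (w ` {..<r})"
proof (rule card_ge_dim_independent)
  have orth2: "w i \<bullet> w j = 0" if "i < r" "j < r" "i \<noteq> j" for i j
    using orth[of i j] orth[of j i] that by (cases "j < i") (auto simp: inner_commute)
  have "inj_on w {..<r}"
    by (rule inj_onI) (metis orth2 w lessThan_iff inner_eq_zero_iff norm_zero zero_neq_one)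
  then show "dim S \<le> card (w ` {..<r})" using r by (simp add: card_image)
  show "w ` {..<r} \<subseteq> S" using w by auto
  have "pairwise orthogonal (w ` {..<r})"
    unfolding pairwise_def orthogonal_def using orth2 by auto
  moreover have "0 \<notin> w ` {..<r}" using w by fastforce
  ultimately show "independent (w ` {..<r})" by (rule pairwise_orthogonal_independent)
qed

text \<open>If \<open>r = dim S\<close>, the \<open>u i\<close> form an orthonormal basis of \<open>S\<close> consisting of eigenvectors
  of \<open>Q Q' Q\<close>, so an eigenvector with a different eigenvalue would be orthogonal to all of
  them.\<close>

lemma principal_vectors_complete_left:
  assumes Q: "orth_proj Q" and Q': "orth_proj Q'"
    and pv: "principal_vectors {x. Q *v x = x} {x. Q' *v x = x} r u v"
    and r: "dim {x. Q *v x = x} \<le> r"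
    and eig: "(Q ** Q' ** Q) *v x = lam *\<^sub>R x" and x0: "x \<noteq> 0" and lam: "lam \<noteq> 0"
  shows "\<exists>i<r. lam = (u i \<bullet> v i)\<^sup>2"
proof (rule ccontr)
  assume ne: "\<not> ?thesis"
  let ?M = "Q ** Q' ** Q"
  have M_sym: "(?M *v a) \<bullet> b = a \<bullet> (?M *v b)" for a b
    by (metis matrix_vector_mult_inner_transpose orth_proj_sandwich_symmetric[OF Q Q'])
  have "Q *v (lam *\<^sub>R x) = lam *\<^sub>R x"
    using orth_proj_idem[OF Q, of "(Q' ** Q) *v x"] eig
    by (simp add: matrix_vector_mul_assoc matrix_mul_assoc)
  then have xS: "Q *v x = x" using lam by (simp add: matrix_vector_mult_scaleR)
  have "x \<bullet> u i = 0" if i: "i < r" for i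
  proof -
    have "?M *v u i = (u i \<bullet> v i)\<^sup>2 *\<^sub>R u i"
      using principal_vectors_images[OF Q Q' pv i] principal_vectorsD(1)[OF pv i]
      by (simp add: matrix_vector_mul_assoc[symmetric] matrix_vector_mult_scaleR power2_eq_square)
    then have "lam * (x \<bullet> u i) = (u i \<bullet> v i)\<^sup>2 * (x \<bullet> u i)"
      using M_sym[of x "u i"] eig by simp
    then show ?thesis using ne i by auto
  qed
  moreover have "x \<in> span (u ` {..<r})"
    using orthonormal_family_spans[of r u "{x. Q *v x = x}"] principal_vectorsD(1,3,5)[OF pv] r xS
    by auto
  ultimately have "orthogonal x x"
    by (intro orthogonal_to_span[of x "u ` {..<r}"]) (auto simp: orthogonal_def)
  then show False using x0 by (simp add: orthogonal_self)
qed

lemma principal_vectors_complete: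
  assumes Q: "orth_proj Q" and Q': "orth_proj Q'"
    and pv: "principal_vectors {x. Q *v x = x} {x. Q' *v x = x} r u v"
    and r: "r = min (dim {x. Q *v x = x}) (dim {x. Q' *v x = x})"
    and eig: "(Q ** Q' ** Q) *v x = lam *\<^sub>R x" and x0: "x \<noteq> 0" and lam: "lam \<noteq> 0"
  shows "\<exists>i<r. lam = (u i \<bullet> v i)\<^sup>2"
proof (cases "dim {x. Q *v x = x} \<le> r")
  case True
  then show ?thesis using principal_vectors_complete_left[OF Q Q' pv _ eig x0 lam] by blast
next
  case False
  then have "dim {x. Q' *v x = x} \<le> r" using r by linarith
  have QQ'Q: "Q *v (Q' *v (Q *v x)) = lam *\<^sub>R x"
    using eig by (simp add: matrix_vector_mul_assoc matrix_mul_assoc)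
  have xS: "Q *v x = x"
  proof -
    have "Q *v (lam *\<^sub>R x) = lam *\<^sub>R x" using orth_proj_idem[OF Q, of "Q' *v (Q *v x)"] QQ'Q by simp
    then show ?thesis using lam by (simp add: matrix_vector_mult_scaleR)
  qed
  \<comment> \<open>swap the roles of the two subspaces: \<open>Q' x\<close> is an eigenvector of \<open>Q' Q Q'\<close>\<close>
  have "(Q' ** Q ** Q') *v (Q' *v x) = lam *\<^sub>R (Q' *v x)"
    using QQ'Q xS orth_proj_idem[OF Q', of x]
    by (simp add: matrix_vector_mul_assoc[symmetric] matrix_vector_mult_scaleR)
  moreover have "Q' *v x \<noteq> 0"
    using QQ'Q xS x0 lam by auto
  ultimately have "\<exists>i<r. lam = (v i \<bullet> u i)\<^sup>2"
    using principal_vectors_complete_left[OF Q' Q principal_vectors_swap[OF pv]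
        \<open>dim {x. Q' *v x = x} \<le> r\<close>] lam by blast
  then show ?thesis by (simp add: inner_commute)
qed

lemma compl_sandwich_eigenvalue_iff_principal:
  assumes Q: "orth_proj Q" and Q': "orth_proj Q'"
    and pv: "principal_vectors {x. Q *v x = x} {x. Q' *v x = x} r u v"
    and r: "r = min (dim {x. Q *v x = x}) (dim {x. Q' *v x = x})"
    and lam: "0 < lam" "lam < 1"
  shows "(\<exists>z. z \<noteq> 0 \<and> ((mat 1 - Q) ** (mat 1 - Q') ** (mat 1 - Q)) *v z = lam *\<^sub>R z)
    \<longleftrightarrow> (\<exists>i<r. lam = (u i \<bullet> v i)\<^sup>2)"
proof
  assume "\<exists>z. z \<noteq> 0 \<and> ((mat 1 - Q) ** (mat 1 - Q') ** (mat 1 - Q)) *v z = lam *\<^sub>R z"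
  then obtain z where "z \<noteq> 0" "((mat 1 - Q) ** (mat 1 - Q') ** (mat 1 - Q)) *v z = lam *\<^sub>R z"
    by blast
  from orth_proj_sandwich_eigenvalue_compl[OF orth_proj_compl[OF Q] orth_proj_compl[OF Q'] this(2,1) lam]
  obtain x where "x \<noteq> 0" "(Q ** Q' ** Q) *v x = lam *\<^sub>R x" by auto
  then show "\<exists>i<r. lam = (u i \<bullet> v i)\<^sup>2"
    using principal_vectors_complete[OF Q Q' pv r] lam by auto
next
  assume "\<exists>i<r. lam = (u i \<bullet> v i)\<^sup>2"
  then obtain i where i: "i < r" "lam = (u i \<bullet> v i)\<^sup>2" by blast
  have "(Q ** Q' ** Q) *v u i = lam *\<^sub>R u i"
    using principal_vectors_images[OF Q Q' pv i(1)] principal_vectorsD(1)[OF pv i(1)] i(2)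
    by (simp add: matrix_vector_mul_assoc[symmetric] matrix_vector_mult_scaleR power2_eq_square)
  moreover have "u i \<noteq> 0" using principal_vectorsD(3)[OF pv i(1)] by auto
  ultimately show "\<exists>z. z \<noteq> 0 \<and> ((mat 1 - Q) ** (mat 1 - Q') ** (mat 1 - Q)) *v z = lam *\<^sub>R z"
    using orth_proj_sandwich_eigenvalue_compl[OF Q Q' _ _ lam] by metis
qed

section \<open>Rayleigh quotients and the spectral norm\<close>

lemma quadratic_nonneg_imp_linear_coeff_0:
  fixes a b :: real
  assumes "b \<ge> 0" "\<And>t. 0 \<le> 2*t*a + t^2*b"
  shows "a = 0"
proof -
  define c where "c = b + 1"
  have c: "c > 0" using assms(1) by (simp add: c_def)
  define t where "t = -a/c"
  have tc: "t * c = -a" using c by (simp add: t_def)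
  have "0 \<le> (2*t*a + t^2*b) * c^2" using assms(2) by simp
  also have "\<dots> = 2*a*(t*c)*c + b*(t*c)^2" by (simp add: algebra_simps power2_eq_square)
  also have "\<dots> = -2*a^2*c + a^2*b" using tc by (simp add: power2_eq_square)
  also have "\<dots> = - (a^2 * (b + 2))" by (simp add: c_def algebra_simps power2_eq_square)
  finally have "a^2 * (b + 2) \<le> 0" by simp
  then show ?thesis using assms(1) by (simp add: mult_le_0_iff)
qed

lemma rayleigh_quotient_max_exists:
  fixes N :: "real^'n^'n"
  assumes E: "subspace E" and x0: "x0 \<in> E" "x0 \<noteq> 0"
  obtains x where "x \<in> E" "x \<bullet> x = 1" "\<And>y. y \<in> E \<Longrightarrow> y \<bullet> (N *v y) \<le> (x \<bullet> (N *v x)) * (y \<bullet> y)"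
proof -
  define K where "K = E \<inter> sphere 0 1"
  have "compact K" unfolding K_def using closed_subspace[OF E] by (auto intro: closed_Int_compact)
  moreover have "(1 / norm x0) *\<^sub>R x0 \<in> K" unfolding K_def using x0 E by (simp add: subspace_scale)
  moreover have "continuous_on K (\<lambda>x. x \<bullet> (N *v x))"
    by (intro continuous_intros linear_continuous_on matrix_vector_mul_bounded_linear)
  ultimately obtain x where xK: "x \<in> K" and xmax: "\<forall>y\<in>K. y \<bullet> (N *v y) \<le> x \<bullet> (N *v x)"
    using continuous_attains_sup[of K] by blast
  show thesis
  proof (rule that)
    show "x \<in> E" "x \<bullet> x = 1" using xK by (auto simp: K_def dot_square_norm)
    fix y assume yE: "y \<in> E"
    show "y \<bullet> (N *v y) \<le> (x \<bullet> (N *v x)) * (y \<bullet> y)"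
    proof (cases "y = 0")
      case False
      let ?z = "(1 / norm y) *\<^sub>R y"
      have "?z \<in> K" unfolding K_def using yE False E by (simp add: subspace_scale)
      then have "?z \<bullet> (N *v ?z) \<le> x \<bullet> (N *v x)" using xmax by blast
      then have "(y \<bullet> (N *v y)) / (norm y)^2 \<le> x \<bullet> (N *v x)"
        by (simp add: matrix_vector_mult_scaleR power2_eq_square divide_inverse mult_ac)
      then show ?thesis using False by (simp add: divide_le_eq dot_square_norm)
    qed simp
  qed
qed

text \<open>First-order condition at the maximiser \<open>x\<close>: the Rayleigh quotient along \<open>x + t y\<close>
  gives a quadratic in \<open>t\<close> whose linear coefficient is \<open>y \<bullet> (\<lambda> x - N x)\<close>.\<close>

lemma rayleigh_max_eigenvector:
  fixes N :: "real^'n^'n"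
  assumes sym: "transpose N = N" and E: "subspace E" and inv: "\<And>x. x \<in> E \<Longrightarrow> N *v x \<in> E"
    and xE: "x \<in> E" and xx: "x \<bullet> x = 1"
    and bound: "\<And>y. y \<in> E \<Longrightarrow> y \<bullet> (N *v y) \<le> (x \<bullet> (N *v x)) * (y \<bullet> y)"
  shows "N *v x = (x \<bullet> (N *v x)) *\<^sub>R x"
proof -
  define lam where "lam = x \<bullet> (N *v x)"
  have N_sym: "a \<bullet> (N *v b) = b \<bullet> (N *v a)" for a b
    using matrix_vector_mult_inner_transpose[of N a b] sym by (simp add: inner_commute)
  define d where "d = lam *\<^sub>R x - N *v x"
  have "y \<bullet> d = 0" if yE: "y \<in> E" for y
  proof (rule quadratic_nonneg_imp_linear_coeff_0)
    show "0 \<le> lam * (y \<bullet> y) - y \<bullet> (N *v y)" using bound[OF yE] by (simp add: lam_def)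
    fix t
    have "x + t *\<^sub>R y \<in> E" using xE yE E by (simp add: subspace_add subspace_scale)
    from bound[OF this] N_sym[of x y]
    have "x \<bullet> (N *v x) + 2 * t * (y \<bullet> (N *v x)) + t^2 * (y \<bullet> (N *v y))
        \<le> lam * (x \<bullet> x + 2 * t * (y \<bullet> x) + t^2 * (y \<bullet> y))"
      unfolding lam_def
      by (simp add: matrix_vector_right_distrib matrix_vector_mult_scaleR inner_add_left
          inner_add_right inner_commute[of x y] algebra_simps power2_eq_square)
    then show "0 \<le> 2 * t * (y \<bullet> d) + t^2 * (lam * (y \<bullet> y) - y \<bullet> (N *v y))"
      unfolding d_def using xx lam_def by (simp add: inner_diff_right algebra_simps power2_eq_square)
  qed
  moreover have "d \<in> E" unfolding d_def using xE inv E by (simp add: subspace_diff subspace_scale)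
  ultimately have "d \<bullet> d = 0" by blast
  then show ?thesis unfolding d_def lam_def by simp
qed

lemma symmetric_max_rayleigh_eigenvector:
  fixes N :: "real^'n^'n"
  assumes sym: "transpose N = N" and E: "subspace E" and inv: "\<And>x. x \<in> E \<Longrightarrow> N *v x \<in> E"
    and x0: "x0 \<in> E" "x0 \<noteq> 0"
  obtains x lam where "x \<in> E" "norm x = 1" "N *v x = lam *\<^sub>R x"
    "\<And>y. y \<in> E \<Longrightarrow> y \<bullet> (N *v y) \<le> lam * (y \<bullet> y)"
proof -
  obtain x where x: "x \<in> E" "x \<bullet> x = 1"
    and bound: "\<And>y. y \<in> E \<Longrightarrow> y \<bullet> (N *v y) \<le> (x \<bullet> (N *v x)) * (y \<bullet> y)"
    by (rule rayleigh_quotient_max_exists[OF E x0, of N]) blast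
  moreover have "norm x = 1" using x(2) by (simp add: norm_eq_sqrt_inner)
  ultimately show thesis
    using that rayleigh_max_eigenvector[OF sym E inv x bound] by blast
qed

lemma norm_le_spec_norm: "norm ((A::real^'n^'m) *v x) \<le> spec_norm A * norm x"
  unfolding spec_norm_def by (rule onorm) (simp add: matrix_vector_mul_bounded_linear)

lemma inner_gram_eq_norm_sq: "y \<bullet> ((transpose A ** A) *v y) = norm ((A::real^'n^'m) *v y) ^ 2"
  using matrix_vector_mult_inner_transpose[of A y "A *v y"]
  by (simp add: matrix_vector_mul_assoc[symmetric] dot_square_norm)

lemma spec_norm_sq_eigenvector:
  fixes A :: "real^'n^'m"
  obtains x where "x \<noteq> 0" "(transpose A ** A) *v x = (spec_norm A)\<^sup>2 *\<^sub>R x"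
proof -
  have sym: "transpose (transpose A ** A) = transpose A ** A" by (simp add: matrix_transpose_mul)
  have ne: "(vec 1 :: real^'n) \<noteq> 0" by (simp add: vec_eq_iff)
  obtain x mu where "x \<in> UNIV" and x: "norm x = 1" "(transpose A ** A) *v x = mu *\<^sub>R x"
    and bound: "\<And>y. y \<in> UNIV \<Longrightarrow> y \<bullet> ((transpose A ** A) *v y) \<le> mu * (y \<bullet> y)"
    by (rule symmetric_max_rayleigh_eigenvector[OF sym subspace_UNIV _ UNIV_I ne]) auto
  have mu: "mu = norm (A *v x) ^ 2"
    using inner_gram_eq_norm_sq[of x A] x by (simp add: dot_square_norm)
  have "spec_norm A \<le> sqrt mu" unfolding spec_norm_def
  proof (rule onorm_le)
    fix y
    have "norm (A *v y) ^ 2 \<le> mu * norm y ^ 2"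
      using bound[of y] by (simp add: inner_gram_eq_norm_sq dot_square_norm)
    from real_sqrt_le_mono[OF this] show "norm (A *v y) \<le> sqrt mu * norm y"
      by (simp add: real_sqrt_mult)
  qed
  moreover have "sqrt mu \<le> spec_norm A" using norm_le_spec_norm[of A x] x(1) mu by simp
  ultimately have "(spec_norm A)\<^sup>2 = mu" using mu by simp
  moreover have "x \<noteq> 0" using x(1) by auto
  ultimately show thesis using that x(2) by blast
qed

lemma gram_eigenvalue_le_spec_norm_sq:
  assumes "(transpose A ** A) *v z = c *\<^sub>R z" "z \<noteq> 0"
  shows "c \<le> (spec_norm A)\<^sup>2"
proof -
  have "c * norm z ^ 2 = norm (A *v z) ^ 2"
    using assms(1) inner_gram_eq_norm_sq[of z A] by (simp add: dot_square_norm)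
  also have "\<dots> \<le> (spec_norm A * norm z) ^ 2"
    using norm_le_spec_norm[of A z] by (simp add: power_mono)
  finally show ?thesis using assms(2) by (simp add: power_mult_distrib)
qed

lemma common_eigenvector:
  fixes B M :: "real^'n^'n"
  assumes "transpose B = B" "B ** M = M ** B" "M *v x = mu *\<^sub>R x" "x \<noteq> 0"
  obtains y lam where "y \<noteq> 0" "M *v y = mu *\<^sub>R y" "B *v y = lam *\<^sub>R y"
proof -
  define E where "E = {x. M *v x = mu *\<^sub>R x}"
  have "subspace E" unfolding E_def subspace_def
    by (auto simp: matrix_vector_right_distrib matrix_vector_mult_scaleR algebra_simps)
  moreover have "B *v y \<in> E" if "y \<in> E" for y
  proof -
    have "M *v (B *v y) = B *v (M *v y)" using assms(2) by (simp add: matrix_vector_mul_assoc)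
    then show ?thesis using that unfolding E_def by (simp add: matrix_vector_mult_scaleR)
  qed
  moreover have "x \<in> E" using assms(3) by (simp add: E_def)
  ultimately obtain y lam where y: "y \<in> E" "norm y = 1" "B *v y = lam *\<^sub>R y"
    and "\<And>z. z \<in> E \<Longrightarrow> z \<bullet> (B *v z) \<le> lam * (z \<bullet> z)"
    by (rule symmetric_max_rayleigh_eigenvector[OF assms(1) _ _ _ assms(4)]) auto
  have "y \<noteq> 0" using y(2) by auto
  with y show thesis using that unfolding E_def by blast
qed

section \<open>Powers of products of projections\<close>

lemma matpow_Suc_right: "matpow A (Suc k) = matpow A k ** A"
  by (induction k) (simp_all add: matrix_mul_assoc)

lemma matpow_add: "matpow A (a + b) = matpow A a ** matpow A b"
  by (induction a) (simp_all add: matrix_mul_assoc)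

lemma matpow_comm: "A ** matpow A k = matpow A k ** A"
  by (metis matpow.simps(2) matpow_Suc_right)

lemma matpow_transpose: "transpose (matpow A k) = matpow (transpose A) k"
  by (induction k) (simp_all add: matrix_transpose_mul matpow_Suc_right matpow_comm)

lemma matpow_eigenvector: "A *v x = lam *\<^sub>R x \<Longrightarrow> matpow A k *v x = (lam ^ k) *\<^sub>R x"
  by (induction k) (simp_all add: matrix_vector_mul_assoc[symmetric] matrix_vector_mult_scaleR)

lemma matpow_intertwine: "X ** P = P ** Y \<Longrightarrow> matpow X k ** P = P ** matpow Y k"
  by (induction k) (simp_all add: matrix_mul_assoc[symmetric], simp add: matrix_mul_assoc)

lemma matpow_mult_Suc: "C ** P = C \<Longrightarrow> matpow (P ** C) (Suc k) = P ** matpow C (Suc k)"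
proof (induction k)
  case (Suc k)
  then show ?case by (simp add: matrix_mul_assoc) (metis matrix_mul_assoc)
qed simp

lemma matpow_mult_commute: "matpow (P ** Q) k ** P = P ** matpow (Q ** P) k"
  by (rule matpow_intertwine) (simp add: matrix_mul_assoc)

lemma matpow_sandwich_Suc:
  "P ** P = P \<Longrightarrow> matpow (P ** Q ** P) (Suc k) = P ** matpow (Q ** P) (Suc k)"
  using matpow_mult_Suc[of "Q ** P" P k] by (simp add: matrix_mul_assoc flip: matrix_mul_assoc)

text \<open>With \<open>C = P\<^sub>2 P\<^sub>1\<close>: \<open>(C\<^sup>T)\<^sup>n (I - P\<^sub>1) C\<^sup>n = P\<^sub>1 C\<^sup>2\<^sup>n\<^sup>-\<^sup>1 - P\<^sub>1 C\<^sup>2\<^sup>n\<close>, because \<open>C\<^sup>T C = P\<^sub>1 C\<close>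
  and \<open>(C\<^sup>T)\<^sup>k P\<^sub>1 = P\<^sub>1 C\<^sup>k\<close>.\<close>

lemma gram_compl_power_eq:
  assumes P1: "orth_proj P1" and P2: "orth_proj P2" and n: "n \<ge> 1"
  defines "A \<equiv> (mat 1 - P1) ** matpow (P2 ** P1) n" and "B \<equiv> P1 ** P2 ** P1"
  shows "transpose A ** A = matpow B (2*n - 1) - matpow B (2*n)"
proof -
  define C where "C = P2 ** P1"
  define D where "D = P1 ** P2"
  have P1_sym: "transpose P1 = P1" "P1 ** P1 = P1" and P2_sym: "transpose P2 = P2" "P2 ** P2 = P2"
    using P1 P2 by (auto simp: orth_proj_def)
  have Q1: "transpose (mat 1 - P1) = mat 1 - P1" "(mat 1 - P1) ** (mat 1 - P1) = mat 1 - P1"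
    using orth_proj_compl[OF P1] by (auto simp: orth_proj_def)
  have DT: "transpose C = D" by (simp add: C_def D_def matrix_transpose_mul P1_sym P2_sym)
  have DP1: "matpow D k ** P1 = P1 ** matpow C k" for k
    unfolding C_def D_def by (rule matpow_mult_commute)
  have DC: "D ** C = P1 ** C"
    using P2_sym(2) by (simp add: D_def C_def matrix_mul_assoc flip: matrix_mul_assoc[of P1 P2 P2])
  have BC: "matpow B (Suc k) = P1 ** matpow C (Suc k)" for k
    unfolding B_def C_def by (rule matpow_sandwich_Suc[OF P1_sym(2)])
  obtain m where m: "n = Suc m" using n by (cases n) auto
  have "transpose A ** A = matpow D n ** ((mat 1 - P1) ** (mat 1 - P1)) ** matpow C n"
    unfolding A_def C_def[symmetric]
    by (simp only: matrix_transpose_mul matpow_transpose DT Q1(1) matrix_mul_assoc)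
  also have "\<dots> = matpow D n ** matpow C n - matpow D n ** P1 ** matpow C n"
    unfolding Q1(2) by (simp add: matrix_diff_ldistrib matrix_diff_rdistrib)
  also have "matpow D n ** matpow C n = matpow B (2*n - 1)"
  proof -
    have "matpow D n ** matpow C n = matpow D m ** (D ** C) ** matpow C m"
      unfolding m matpow_Suc_right[of D m] matpow.simps(2)[of C m] by (simp only: matrix_mul_assoc)
    also have "\<dots> = P1 ** (matpow C m ** matpow C (Suc m))"
      by (simp add: DC DP1 matrix_mul_assoc)
    also have "\<dots> = P1 ** matpow C (Suc (m + m))"
      by (simp only: matpow_add[symmetric] add_Suc_right)
    finally show ?thesis using BC[of "m + m"] m by (simp add: mult_2)
  qed
  also have "matpow D n ** P1 ** matpow C n = matpow B (2*n)"
  proof -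
    have "matpow D n ** P1 ** matpow C n = P1 ** matpow C (n + n)"
      by (simp add: DP1 matpow_add matrix_mul_assoc)
    then show ?thesis using BC[of "Suc (m + m)"] m by (simp add: mult_2)
  qed
  finally show ?thesis .
qed

lemma gram_compl_power_eigenvector:
  assumes P1: "orth_proj P1" and P2: "orth_proj P2" and n: "n \<ge> 1"
    and eig: "(P1 ** P2 ** P1) *v x = lam *\<^sub>R x"
  defines "A \<equiv> (mat 1 - P1) ** matpow (P2 ** P1) n"
  shows "(transpose A ** A) *v x = (lam ^ (2*n - 1) * (1 - lam)) *\<^sub>R x"
proof -
  have "lam ^ (2*n) = lam * lam ^ (2*n - 1)"
    using n by (metis Suc_diff_1 mult_pos_pos power_Suc zero_less_numeral less_le_trans zero_less_one)
  then show ?thesis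
    unfolding A_def gram_compl_power_eq[OF P1 P2 n]
    by (simp add: matrix_vector_mult_diff_rdistrib matpow_eigenvector[OF eig] algebra_simps)
qed

lemma if_empty_Max_eqI:
  fixes m :: "'a :: {linorder, zero}"
  assumes "finite E" "\<And>e. e \<in> E \<Longrightarrow> 0 \<le> e \<and> e \<le> m" "m \<noteq> 0 \<Longrightarrow> m \<in> E" "0 \<le> m"
  shows "(if E = {} then 0 else Max E) = m"
proof (cases "E = {}")
  case True
  then show ?thesis using assms(3) by auto
next
  case False
  then have "Max E \<in> E" using assms(1) by simp
  moreover have "m \<le> Max E" using assms(1,3) calculation by (cases "m = 0") (auto simp: assms(2))
  ultimately show ?thesis using False assms(2) by (simp add: antisym)
qed

lemma compl_power_eigenvalue_le_spec_norm_sq: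
  assumes P1: "orth_proj P1" and P2: "orth_proj P2" and n: "n \<ge> 1"
    and eig: "(P1 ** P2 ** P1) *v z = t *\<^sub>R z" and "z \<noteq> 0"
  shows "t ^ (2*n - 1) * (1 - t) \<le> (spec_norm ((mat 1 - P1) ** matpow (P2 ** P1) n))\<^sup>2"
  using gram_eigenvalue_le_spec_norm_sq[OF gram_compl_power_eigenvector[OF P1 P2 n eig]] \<open>z \<noteq> 0\<close> .

lemma spec_norm_sq_compl_power_attained:
  assumes P1: "orth_proj P1" and P2: "orth_proj P2" and n: "n \<ge> 1"
  obtains y lam where "y \<noteq> 0" "(P1 ** P2 ** P1) *v y = lam *\<^sub>R y"
    and "(spec_norm ((mat 1 - P1) ** matpow (P2 ** P1) n))\<^sup>2 = lam ^ (2*n - 1) * (1 - lam)"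
proof -
  define A where "A = (mat 1 - P1) ** matpow (P2 ** P1) n"
  define B where "B = P1 ** P2 ** P1"
  have "B ** (transpose A ** A) = (transpose A ** A) ** B"
    unfolding A_def B_def gram_compl_power_eq[OF P1 P2 n]
    by (simp add: matrix_diff_ldistrib matrix_diff_rdistrib matpow_comm)
  moreover obtain x where "x \<noteq> 0" "(transpose A ** A) *v x = (spec_norm A)\<^sup>2 *\<^sub>R x"
    by (rule spec_norm_sq_eigenvector)
  ultimately obtain y lam where y: "y \<noteq> 0" "(transpose A ** A) *v y = (spec_norm A)\<^sup>2 *\<^sub>R y"
    and lam: "B *v y = lam *\<^sub>R y"
    using common_eigenvector[OF orth_proj_sandwich_symmetric[OF P1 P2]] unfolding B_def by blast
  have "(spec_norm A)\<^sup>2 = lam ^ (2*n - 1) * (1 - lam)"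
    using y gram_compl_power_eigenvector[OF P1 P2 n lam[unfolded B_def]]
    unfolding A_def by (metis scaleR_cancel_right)
  with y(1) lam show thesis using that unfolding A_def B_def by blast
qed

lemma spec_norm_sq_compl_power_principal:
  assumes P1: "orth_proj P1" and P2: "orth_proj P2" and n: "n \<ge> 1"
    and pv: "principal_vectors {x. (mat 1 - P1) *v x = x} {x. (mat 1 - P2) *v x = x} r u v"
    and r: "r = min (dim {x. (mat 1 - P1) *v x = x}) (dim {x. (mat 1 - P2) *v x = x})"
  shows "(spec_norm ((mat 1 - P1) ** matpow (P2 ** P1) n))\<^sup>2 =
    (let E = {((u i \<bullet> v i)\<^sup>2) ^ (2*n - 1) * (1 - (u i \<bullet> v i)\<^sup>2) | i. i < r \<and> \<bar>u i \<bullet> v i\<bar> \<noteq> 1}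
     in if E = {} then 0 else Max E)"
proof -
  define f where "f t = t ^ (2*n - 1) * (1 - t)" for t :: real
  have f0: "f 0 = 0" using n by (simp add: f_def)
  have eig_iff: "(\<exists>z. z \<noteq> 0 \<and> (P1 ** P2 ** P1) *v z = t *\<^sub>R z) \<longleftrightarrow> (\<exists>i<r. t = (u i \<bullet> v i)\<^sup>2)"
    if "0 < t" "t < 1" for t
    using compl_sandwich_eigenvalue_iff_principal[OF orth_proj_compl[OF P1] orth_proj_compl[OF P2]
        pv r that] by simp
  obtain y lam where y: "y \<noteq> 0" "(P1 ** P2 ** P1) *v y = lam *\<^sub>R y"
    and spec: "(spec_norm ((mat 1 - P1) ** matpow (P2 ** P1) n))\<^sup>2 = f lam"
    unfolding f_def by (rule spec_norm_sq_compl_power_attained[OF P1 P2 n])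
  have f_lam: "0 \<le> f lam" unfolding spec[symmetric] by simp
  show ?thesis
    unfolding Let_def f_def[symmetric] spec
  proof (rule if_empty_Max_eqI[symmetric])
    show "finite {f ((u i \<bullet> v i)\<^sup>2) | i. i < r \<and> \<bar>u i \<bullet> v i\<bar> \<noteq> 1}" by simp
    show "0 \<le> f lam" by (fact f_lam)
    fix e assume "e \<in> {f ((u i \<bullet> v i)\<^sup>2) | i. i < r \<and> \<bar>u i \<bullet> v i\<bar> \<noteq> 1}"
    then obtain i where i: "i < r" "\<bar>u i \<bullet> v i\<bar> \<noteq> 1" "e = f ((u i \<bullet> v i)\<^sup>2)" by blast
    have sq: "(u i \<bullet> v i)\<^sup>2 < 1"
      using abs_inner_principal_vectors_le_1[OF pv i(1)] i(2) by (simp add: abs_square_less_1)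
    show "0 \<le> e \<and> e \<le> f lam"
    proof (cases "u i \<bullet> v i = 0")
      case False
      then obtain z where "z \<noteq> 0" "(P1 ** P2 ** P1) *v z = (u i \<bullet> v i)\<^sup>2 *\<^sub>R z"
        using eig_iff[of "(u i \<bullet> v i)\<^sup>2"] sq i(1) by auto
      then show ?thesis
        using compl_power_eigenvalue_le_spec_norm_sq[OF P1 P2 n] sq i(3) spec by (simp add: f_def)
    qed (use i(3) f0 f_lam in simp)
  next
    assume "f lam \<noteq> 0"
    moreover have "0 \<le> lam" "lam \<le> 1"
      using orth_proj_sandwich_eigenvalue_bounds[OF P1 P2 y(2,1)] by auto
    ultimately have "0 < lam" "lam < 1" using f0 by (auto simp: f_def less_le)
    then obtain i where i: "i < r" "lam = (u i \<bullet> v i)\<^sup>2" using eig_iff y by blast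
    then have "\<bar>u i \<bullet> v i\<bar> \<noteq> 1" using \<open>lam < 1\<close> abs_square_eq_1[of "u i \<bullet> v i"] by auto
    then show "f lam \<in> {f ((u i \<bullet> v i)\<^sup>2) | i. i < r \<and> \<bar>u i \<bullet> v i\<bar> \<noteq> 1}"
      using i by blast
  qed
qed

section \<open>Principal angles\<close>

lemma principal_angles_cos:
  obtains u v where "principal_vectors (row_space X1) (row_space X2) (n_angles X1 X2) u v"
    and "\<And>i. i < n_angles X1 X2 \<Longrightarrow> cos (principal_angle X1 X2 i) = \<bar>u i \<bullet> v i\<bar>"
    and "\<And>i. i < n_angles X1 X2 \<Longrightarrow> principal_angle X1 X2 i = 0 \<longleftrightarrow> \<bar>u i \<bullet> v i\<bar> = 1"
proof -
  let ?pv = "\<lambda>(u, v). principal_vectors (row_space X1) (row_space X2) (n_angles X1 X2) u v"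
  have "\<exists>u v. principal_vectors (row_space X1) (row_space X2) (n_angles X1 X2) u v"
    unfolding n_angles_def rank_eq_dim_row_space
    by (rule principal_vectors_exist[OF subspace_row_space subspace_row_space]) auto
  then have "?pv (SOME p. ?pv p)" by (metis (mono_tags, lifting) case_prodI someI_ex)
  then obtain u v where uv: "(SOME p. ?pv p) = (u, v)" and pv: "?pv (u, v)"
    by (metis surj_pair)
  have angle: "principal_angle X1 X2 i = arccos \<bar>u i \<bullet> v i\<bar>" for i
    unfolding principal_angle_def uv by simp
  show thesis
  proof (rule that)
    show "principal_vectors (row_space X1) (row_space X2) (n_angles X1 X2) u v" using pv by simp
    fix i assume "i < n_angles X1 X2"
    then have "\<bar>u i \<bullet> v i\<bar> \<le> 1" using abs_inner_principal_vectors_le_1 pv by auto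
    then show "cos (principal_angle X1 X2 i) = \<bar>u i \<bullet> v i\<bar>"
      and "principal_angle X1 X2 i = 0 \<longleftrightarrow> \<bar>u i \<bullet> v i\<bar> = 1"
      unfolding angle using arccos_eq_iff[of "\<bar>u i \<bullet> v i\<bar>" 1] by (auto simp: cos_arccos_abs)
  qed
qed

theorem mainTheorem9:
  fixes X1 :: "real^'d^'n1" and X2 :: "real^'d^'n2" and n :: nat
  assumes "n \<ge> 1"
  defines "P1 \<equiv> mat 1 - pinv X1 ** X1"
      and "P2 \<equiv> mat 1 - pinv X2 ** X2"
  shows "(spec_norm ((mat 1 - P1) ** matpow (P2 ** P1) n))\<^sup>2 =
    (let A = {(cos (principal_angle X1 X2 i))\<^sup>2 ^ (2*n - 1) * (1 - (cos (principal_angle X1 X2 i))\<^sup>2) | i.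
                i < n_angles X1 X2 \<and> principal_angle X1 X2 i \<noteq> 0}
     in if A = {} then 0 else Max A)"
proof -
  have P: "orth_proj P1" "orth_proj P2"
    unfolding P1_def P2_def by (intro orth_proj_compl orth_proj_pinv)+
  have row_spaces: "row_space X1 = {x. (mat 1 - P1) *v x = x}" "row_space X2 = {x. (mat 1 - P2) *v x = x}"
    unfolding P1_def P2_def by (simp_all add: row_space_eq_fixed_points)
  obtain u v where pv: "principal_vectors (row_space X1) (row_space X2) (n_angles X1 X2) u v"
    and cos: "\<And>i. i < n_angles X1 X2 \<Longrightarrow> cos (principal_angle X1 X2 i) = \<bar>u i \<bullet> v i\<bar>"
    and zero: "\<And>i. i < n_angles X1 X2 \<Longrightarrow> principal_angle X1 X2 i = 0 \<longleftrightarrow> \<bar>u i \<bullet> v i\<bar> = 1"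
    by (rule principal_angles_cos[of X1 X2]) blast
  have "{(cos (principal_angle X1 X2 i))\<^sup>2 ^ (2*n - 1) * (1 - (cos (principal_angle X1 X2 i))\<^sup>2) | i.
          i < n_angles X1 X2 \<and> principal_angle X1 X2 i \<noteq> 0}
      = {((u i \<bullet> v i)\<^sup>2) ^ (2*n - 1) * (1 - (u i \<bullet> v i)\<^sup>2) | i.
          i < n_angles X1 X2 \<and> \<bar>u i \<bullet> v i\<bar> \<noteq> 1}"
    using cos zero by (metis (no_types, opaque_lifting) power2_abs)
  moreover have "n_angles X1 X2 = min (dim {x. (mat 1 - P1) *v x = x}) (dim {x. (mat 1 - P2) *v x = x})"
    unfolding n_angles_def rank_eq_dim_row_space row_spaces ..
  ultimately show ?thesis
    using spec_norm_sq_compl_power_principal[OF P assms(1) pv[unfolded row_spaces]] by simp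
qed

end
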